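(* Let $\mathbf x=(x_1,x_2,x_3)\in\mathbb Z_{\ge1}^3$ and let $\mathbf q=(\mathbf r,\mathbf x)$, where $\mathbf r$ is one of (i) $\mathbf r=(1,\,1+x_1,\,(1+x_1)(1+x_2))$; (ii) $\mathbf r=(1+x_2,\,1+x_1(1+x_2),\,(1+x_1(1+x_2))(1+x_2))$; (iv) $\mathbf r=(1,\,(1+x_1)(1+x_3),\,(1+x_1)(1+x_2(1+x_3)))$. Then the $h^*$-polynomial of $\Delta_{(1,\mathbf q)}$ is unimodal.
   Context: For $\mathbf q=(q_1,\dots,q_n)\in\mathbb Z_{\ge1}^n$ with $q_1\le\cdots\le q_n$, let $\Delta_{(1,\mathbf q)}=\mathrm{conv}\{e_1,\dots,e_n,-\sum_{i=1}^n q_ie_i\}\subset\mathbb R^n$. Given distinct positive integers $r_1<r_2<r_3$ and positive integers $x_1,x_2,x_3$, $\mathbf q=(\mathbf r,\mathbf x)$ denotes the vector consisting of $x_1$ copies of $r_1$, then $x_2$ copies of $r_2$, then $x_3$ copies of $r_3$. For a lattice polytope $P\subset\mathbb R^n$ of dimension $\dim P$, its Ehrhart series is $\sum_{t\ge0}|tP\cap\mathbb Z^n|z^t=h^*(P;z)/(1-z)^{\dim P+1}$, where $h^*(P;z)=h_0^*+h_1^*z+\cdots+h_s^*z^s$ is a polynomial with nonnegative integer coefficients, the $h^*$-polynomial. A polynomial $\sum_{i=0}^s p_iz^i$ is unimodal if there is $t$ with $p_0\le\cdots\le p_t\ge\cdots\ge p_s$. *)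

theory Defs
  imports "HOL-Analysis.Analysis" "HOL-Computational_Algebra.Polynomial_FPS"
begin

definition simplex1q :: "('n::finite \<Rightarrow> nat) \<Rightarrow> (real^'n) set" where
  "simplex1q q = convex hull (insert (\<chi> i. - real (q i)) {axis i 1 | i. True})"

definition lattice_count :: "(real^'n::finite) set \<Rightarrow> nat \<Rightarrow> nat" where
  "lattice_count P t = card {z \<in> (\<lambda>p. real t *\<^sub>R p) ` P. \<forall>i. z $ i \<in> \<int>}"

definition ehrhart_series :: "(real^'n::finite) set \<Rightarrow> int fps" where
  "ehrhart_series P = Abs_fps (\<lambda>t. int (lattice_count P t))"

definition h_star :: "(real^'n::finite) set \<Rightarrow> int poly" where
  "h_star P = (THE p. fps_of_poly p = ehrhart_series P * (1 - fps_X) ^ (nat (aff_dim P) + 1))"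

definition unimodal :: "int poly \<Rightarrow> bool" where
  "unimodal p \<longleftrightarrow> (\<exists>t \<le> degree p. (\<forall>i < t. coeff p i \<le> coeff p (Suc i)) \<and>
                       (\<forall>i. t \<le> i \<and> i < degree p \<longrightarrow> coeff p (Suc i) \<le> coeff p i))"

text \<open>q = (r,x): x1 copies of r1, then x2 copies of r2, then x3 copies of r3 (positions 0..n-1).\<close>
definition qvec :: "nat \<Rightarrow> nat \<Rightarrow> nat \<Rightarrow> nat \<Rightarrow> nat \<Rightarrow> nat \<Rightarrow> nat \<Rightarrow> nat" where
  "qvec r1 r2 r3 x1 x2 x3 j = (if j < x1 then r1 else if j < x1 + x2 then r2 else r3)"

end

theory Submission
  imports Defs
begin

(* Let N = 1 + q_1 + ... + q_n. A lattice point of t Delta_(1,q) is encoded by a residue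
   b in {0..N-1} together with a weak composition of t - w(b) into n + 1 parts, where
   w(b) = b - sum_i floor(q_i b / N); hence h*(z) = sum_(b<N) z^w(b). For the three
   families of q the number N factors, and writing b in the matching mixed radix turns this
   sum into a product of geometric sums [k] = 1 + z + ... + z^(k-1), in cases (ii) and (iv)
   times [a+y+1] + (y+2) z [a][y]. The latter has nonnegative coefficients and is unimodal,
   and multiplying a nonnegative unimodal sequence by [k] keeps it unimodal. *)

section \<open>Weak compositions\<close>

definition weak_compositions :: "'a set \<Rightarrow> nat \<Rightarrow> ('a \<Rightarrow> nat) set" where
  "weak_compositions I m = {v. (\<forall>i. i \<notin> I \<longrightarrow> v i = 0) \<and> sum v I = m}"

lemma finite_weak_compositions:
  assumes "finite I"
  shows "finite (weak_compositions I m)"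
proof (rule finite_subset)
  show "weak_compositions I m \<subseteq> {f. \<forall>x. (x \<in> I \<longrightarrow> f x \<in> {..m}) \<and> (x \<notin> I \<longrightarrow> f x = 0)}"
    using assms by (auto intro!: member_le_sum simp: weak_compositions_def)
  show "finite {f. \<forall>x. (x \<in> I \<longrightarrow> f x \<in> {..m}) \<and> (x \<notin> I \<longrightarrow> f x = (0::nat))}"
    by (rule finite_set_of_finite_funs[OF assms]) simp
qed

lemma card_weak_compositions_insert:
  assumes I: "finite I" and a: "a \<notin> I"
  shows "card (weak_compositions (insert a I) m) = (\<Sum>j\<le>m. card (weak_compositions I j))"
proof -
  let ?W = weak_compositions
  have "bij_betw (\<lambda>v. (v a, v(a:=0))) (?W (insert a I) m) (SIGMA j:{..m}. ?W I (m - j))"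
  proof (rule bij_betwI[where g="\<lambda>(j, v). v(a:=j)"])
    show "(\<lambda>v. (v a, v(a:=0))) \<in> ?W (insert a I) m \<rightarrow> (SIGMA j:{..m}. ?W I (m - j))"
    proof
      fix v assume v: "v \<in> ?W (insert a I) m"
      have "sum (v(a:=0)) I = sum v I" using a by (intro sum.cong) auto
      then show "(v a, v(a:=0)) \<in> (SIGMA j:{..m}. ?W I (m - j))"
        using v I a by (auto simp: weak_compositions_def)
    qed
    show "(\<lambda>(j, v). v(a:=j)) \<in> (SIGMA j:{..m}. ?W I (m - j)) \<rightarrow> ?W (insert a I) m"
    proof (clarsimp)
      fix j v assume "j \<le> m" "v \<in> ?W I (m - j)"
      moreover have "sum (v(a:=j)) I = sum v I" using a by (intro sum.cong) auto
      ultimately show "v(a:=j) \<in> ?W (insert a I) m"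
        using I a by (auto simp: weak_compositions_def)
    qed
  qed (use a in \<open>auto simp: weak_compositions_def\<close>)
  then have "card (?W (insert a I) m) = card (SIGMA j:{..m}. ?W I (m - j))"
    by (rule bij_betw_same_card)
  also have "\<dots> = (\<Sum>j\<le>m. card (?W I (m - j)))"
    using finite_weak_compositions[OF I] by (simp add: card_SigmaI)
  also have "\<dots> = (\<Sum>j\<le>m. card (?W I j))"
    by (rule sum.reindex_bij_witness[where i="\<lambda>j. m - j" and j="\<lambda>j. m - j"]) auto
  finally show ?thesis .
qed

lemma weak_compositions_empty: "weak_compositions {} m = (if m = 0 then {\<lambda>_. 0} else {})"
  by (auto simp: weak_compositions_def)

lemma fps_weak_compositions_mult:
  assumes "finite I"
  shows "Abs_fps (\<lambda>m. int (card (weak_compositions I m))) * (1 - fps_X) ^ card I = 1"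
  using assms
proof (induction I rule: finite_induct)
  case empty
  show ?case by (rule fps_ext) (simp add: weak_compositions_empty)
next
  case (insert a I)
  let ?C = "\<lambda>I. Abs_fps (\<lambda>m. int (card (weak_compositions I m)))"
  have "?C (insert a I) = Abs_fps (\<lambda>n. \<Sum>i = 0..n. fps_nth (?C I) i)"
    using insert by (auto intro!: fps_ext simp: card_weak_compositions_insert atMost_atLeast0)
  then have "?C I = (1 - fps_X) * ?C (insert a I)"
    using fps_divide_fps_X_minus1_sum_lemma by metis
  moreover have "?C (insert a I) * (1 - fps_X) ^ card (insert a I)
      = ((1 - fps_X) * ?C (insert a I)) * (1 - fps_X) ^ card I"
    using insert by (simp add: mult_ac)
  ultimately show ?case
    using insert.IH by (simp only:)
qed

section \<open>Lattice points of the dilated simplex\<close>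

definition nvol :: "('n::finite \<Rightarrow> nat) \<Rightarrow> nat" where
  "nvol q = 1 + sum q UNIV"

lemma nvol_pos: "0 < nvol q"
  by (simp add: nvol_def)

(* z lies in s Delta_(1,q) iff its barycentric coordinates are nonnegative: they are
   (s - sum z) / nvol q at the vertex -q and (nvol q z_i + (s - sum z) q_i) / nvol q at e_i. *)
definition simplex_ineqs :: "('n::finite \<Rightarrow> nat) \<Rightarrow> 'a::linordered_idom \<Rightarrow> ('n \<Rightarrow> 'a) \<Rightarrow> bool" where
  "simplex_ineqs q s z \<longleftrightarrow> 0 \<le> s - sum z UNIV \<and>
     (\<forall>i. 0 \<le> of_nat (nvol q) * z i + (s - sum z UNIV) * of_nat (q i))"

lemma convex_simplex_ineqs: "convex {p :: real^'n::finite. simplex_ineqs q 1 (($) p)}"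
proof (rule convexI)
  fix x y :: "real^'n" and u v :: real
  assume "x \<in> {p. simplex_ineqs q 1 (($) p)}" "y \<in> {p. simplex_ineqs q 1 (($) p)}"
    and uv: "0 \<le> u" "0 \<le> v" "u + v = 1"
  then have x: "simplex_ineqs q 1 (($) x)" and y: "simplex_ineqs q 1 (($) y)" by simp_all
  let ?z = "u *\<^sub>R x + v *\<^sub>R y"
  have "sum (($) ?z) UNIV = u * sum (($) x) UNIV + v * sum (($) y) UNIV"
    by (simp add: sum.distrib sum_distrib_left)
  then have s: "1 - sum (($) ?z) UNIV = u * (1 - sum (($) x) UNIV) + v * (1 - sum (($) y) UNIV)"
    using uv by (simp add: algebra_simps)
  have "real (nvol q) * ?z $ i + (1 - sum (($) ?z) UNIV) * real (q i)
      = u * (real (nvol q) * x $ i + (1 - sum (($) x) UNIV) * real (q i))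
      + v * (real (nvol q) * y $ i + (1 - sum (($) y) UNIV) * real (q i))" for i
    unfolding s by (simp add: algebra_simps)
  then show "?z \<in> {p. simplex_ineqs q 1 (($) p)}"
    using x y uv unfolding simplex_ineqs_def mem_Collect_eq s by simp
qed

lemma simplex_ineqs_imp_mem_simplex1q:
  fixes p :: "real^'n::finite"
  assumes p: "simplex_ineqs q 1 (($) p)"
  shows "p \<in> simplex1q q"
proof -
  define N where "N = real (nvol q)"
  have N: "N > 0" "N = 1 + (\<Sum>i\<in>UNIV. real (q i))"
    using nvol_pos[of q] by (simp add: N_def, simp add: N_def nvol_def)
  define mu where "mu = (1 - sum (($) p) UNIV) / N"
  define lam where "lam i = p $ i + mu * real (q i)" for i
  have mu0: "0 \<le> mu" using p N by (simp add: simplex_ineqs_def mu_def N_def)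
  have lam0: "0 \<le> lam i" for i
  proof -
    have "lam i = (N * p $ i + (1 - sum (($) p) UNIV) * real (q i)) / N"
      using N by (simp add: lam_def mu_def field_simps)
    then show ?thesis using p N by (simp add: simplex_ineqs_def N_def)
  qed
  have "(\<Sum>i\<in>UNIV. lam i) = sum (($) p) UNIV + mu * (\<Sum>i\<in>UNIV. real (q i))"
    by (simp add: lam_def sum.distrib sum_distrib_left)
  also have "\<dots> = 1 - mu"
    using N by (simp add: mu_def field_simps)
  finally have sum_lam: "(\<Sum>i\<in>UNIV. lam i) = 1 - mu" .
  define a where "a x = (case x of None \<Rightarrow> mu | Some i \<Rightarrow> lam i)" for x :: "'n option"
  define y where "y x = (case x of None \<Rightarrow> \<chi> i. - real (q i) | Some i \<Rightarrow> axis i 1)"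
    for x :: "'n option"
  have "(\<Sum>j\<in>UNIV. a j *\<^sub>R y j) \<in> simplex1q q"
    unfolding simplex1q_def
  proof (rule convex_sum)
    show "(\<Sum>i\<in>UNIV. a i) = 1" using sum_lam by (simp add: UNIV_option_conv sum.reindex a_def)
    show "\<And>i. i \<in> UNIV \<Longrightarrow> 0 \<le> a i" using mu0 lam0 by (auto simp: a_def split: option.splits)
    show "\<And>i. i \<in> UNIV \<Longrightarrow> y i \<in> convex hull insert (\<chi> i. - real (q i)) {axis i 1 |i. True}"
      by (auto simp: y_def split: option.splits intro: hull_inc)
  qed simp_all
  moreover have "(\<Sum>j\<in>UNIV. a j *\<^sub>R y j) = p"
  proof (rule vec_eq_iff[THEN iffD2], rule allI)
    fix k
    have "(\<Sum>i\<in>UNIV. lam i * (axis i 1 :: real^'n) $ k) = lam k"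
      by (simp add: axis_def if_distrib cong: if_cong)
    then show "(\<Sum>j\<in>UNIV. a j *\<^sub>R y j) $ k = p $ k"
      by (simp add: UNIV_option_conv sum.reindex a_def y_def lam_def)
  qed
  ultimately show ?thesis by simp
qed

lemma simplex1q_eq:
  fixes q :: "'n::finite \<Rightarrow> nat"
  shows "simplex1q q = {p. simplex_ineqs q 1 (($) p)}"
proof
  show "simplex1q q \<subseteq> {p. simplex_ineqs q 1 (($) p)}"
    unfolding simplex1q_def
  proof (rule hull_minimal)
    have "simplex_ineqs q 1 (($) (\<chi> i. - real (q i)))"
      by (simp add: simplex_ineqs_def nvol_def sum_negf sum_nonneg algebra_simps)
    moreover have "simplex_ineqs q 1 (($) (axis i 1))" for i
      by (simp add: simplex_ineqs_def axis_def)
    ultimately show "insert (\<chi> i. - real (q i)) {axis i 1 |i. True} \<subseteq> {p. simplex_ineqs q 1 (($) p)}"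
      by blast
  qed (rule convex_simplex_ineqs)
qed (auto intro: simplex_ineqs_imp_mem_simplex1q)

lemma simplex_ineqs_scale:
  assumes "0 < c"
  shows "simplex_ineqs q (c * s) (\<lambda>i. c * z i) \<longleftrightarrow> simplex_ineqs q s z"
proof -
  have "c * s - (\<Sum>i\<in>UNIV. c * z i) = c * (s - sum z UNIV)"
    by (simp add: sum_distrib_left algebra_simps)
  moreover have "of_nat (nvol q) * (c * z i) + c * (s - sum z UNIV) * of_nat (q i)
      = c * (of_nat (nvol q) * z i + (s - sum z UNIV) * of_nat (q i))" for i
    by (simp add: algebra_simps)
  ultimately show ?thesis
    using assms by (simp add: simplex_ineqs_def zero_le_mult_iff)
qed

lemma simplex_ineqs_zero: "simplex_ineqs q 0 z \<longleftrightarrow> z = (\<lambda>_. 0)"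
proof
  assume z: "simplex_ineqs q 0 z"
  let ?S = "sum z UNIV"
  have c: "0 \<le> of_nat (nvol q) * z i - ?S * of_nat (q i)" for i
    using z by (simp add: simplex_ineqs_def)
  have "0 \<le> (\<Sum>i\<in>UNIV. of_nat (nvol q) * z i - ?S * of_nat (q i))"
    by (rule sum_nonneg) (use c in auto)
  also have "\<dots> = of_nat (nvol q) * ?S - ?S * (\<Sum>i\<in>UNIV. of_nat (q i))"
    by (simp add: sum_subtractf sum_distrib_left)
  also have "\<dots> = ?S"
    by (simp add: nvol_def algebra_simps)
  finally have "?S = 0" using z by (simp add: simplex_ineqs_def)
  then have "0 \<le> z i" for i
    using c[of i] nvol_pos[of q] by (simp add: zero_le_mult_iff)
  then show "z = (\<lambda>_. 0)"
    using \<open>?S = 0\<close> sum_nonneg_eq_0_iff[of UNIV z] by auto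
qed (simp add: simplex_ineqs_def)

lemma simplex_ineqs_of_int:
  fixes q :: "'n::finite \<Rightarrow> nat" and k :: "'n \<Rightarrow> int"
  shows "simplex_ineqs q (of_int s :: 'a::linordered_idom) (\<lambda>i. of_int (k i)) \<longleftrightarrow> simplex_ineqs q s k"
proof -
  have "of_nat (nvol q) * of_int (k i) + (of_int s - (\<Sum>j\<in>UNIV. of_int (k j))) * of_nat (q i)
      = (of_int (int (nvol q) * k i + (s - sum k UNIV) * int (q i)) :: 'a::linordered_idom)" for i
    by simp
  moreover have "of_int s - (\<Sum>j\<in>UNIV. of_int (k j)) = (of_int (s - sum k UNIV) :: 'a)"
    by simp
  ultimately show ?thesis
    unfolding simplex_ineqs_def by (simp only: of_int_0_le_iff)
qed

lemma dilated_simplex1q_iff: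
  "z \<in> (\<lambda>p. real t *\<^sub>R p) ` simplex1q q \<longleftrightarrow> simplex_ineqs q (real t) (($) z)"
proof (cases "t = 0")
  case True
  have "simplex1q q \<noteq> {}" by (simp add: simplex1q_def)
  then show ?thesis
    using True by (auto simp: simplex_ineqs_zero vec_eq_iff fun_eq_iff)
next
  case False
  then have t: "real t > 0" by simp
  have "z \<in> (\<lambda>p. real t *\<^sub>R p) ` simplex1q q \<longleftrightarrow> (1 / real t) *\<^sub>R z \<in> simplex1q q"
    using t by (auto simp: image_iff intro!: bexI[where x="(1 / real t) *\<^sub>R z"])
  also have "\<dots> \<longleftrightarrow> simplex_ineqs q 1 (\<lambda>i. z $ i / real t)"
  proof -
    have "($) ((1 / real t) *\<^sub>R z) = (\<lambda>i. z $ i / real t)" by (simp add: fun_eq_iff)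
    then show ?thesis by (simp add: simplex1q_eq)
  qed
  also have "\<dots> \<longleftrightarrow> simplex_ineqs q (real t * 1) (\<lambda>i. real t * (z $ i / real t))"
    using t by (simp only: simplex_ineqs_scale)
  also have "(\<lambda>i. real t * (z $ i / real t)) = ($) z"
    using t by (simp add: fun_eq_iff)
  finally show ?thesis by simp
qed

lemma lattice_count_simplex1q:
  "lattice_count (simplex1q q) t = card {k. simplex_ineqs q (int t) k}"
proof -
  let ?L = "{z \<in> (\<lambda>p. real t *\<^sub>R p) ` simplex1q q. \<forall>i. z $ i \<in> \<int>}"
  have "bij_betw (\<lambda>z i. \<lfloor>z $ i\<rfloor>) ?L {k. simplex_ineqs q (int t) k}"
  proof (rule bij_betwI[where g="\<lambda>k. \<chi> i. of_int (k i)"])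
    show "(\<lambda>z i. \<lfloor>z $ i\<rfloor>) \<in> ?L \<rightarrow> {k. simplex_ineqs q (int t) k}"
    proof
      fix z assume z: "z \<in> ?L"
      then have "($) z = (\<lambda>i. of_int \<lfloor>z $ i\<rfloor>)" by (auto elim: Ints_cases)
      moreover have "simplex_ineqs q (real t) (($) z)"
        using z by (simp add: dilated_simplex1q_iff)
      ultimately have "simplex_ineqs q (of_int (int t)) (\<lambda>i. of_int \<lfloor>z $ i\<rfloor> :: real)"
        by (metis of_int_of_nat_eq)
      then show "(\<lambda>i. \<lfloor>z $ i\<rfloor>) \<in> {k. simplex_ineqs q (int t) k}"
        by (simp only: simplex_ineqs_of_int mem_Collect_eq)
    qed
    show "(\<lambda>k. \<chi> i. of_int (k i)) \<in> {k. simplex_ineqs q (int t) k} \<rightarrow> ?L"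
    proof
      fix k assume "k \<in> {k. simplex_ineqs q (int t) k}"
      then have "simplex_ineqs q (of_int (int t)) (\<lambda>i. of_int (k i) :: real)"
        by (simp only: simplex_ineqs_of_int mem_Collect_eq)
      then show "(\<chi> i. of_int (k i)) \<in> ?L"
        by (simp add: dilated_simplex1q_iff vec_lambda_inverse)
    qed
  qed (auto simp: vec_eq_iff elim: Ints_cases)
  then show ?thesis
    unfolding lattice_count_def by (rule bij_betw_same_card)
qed

section \<open>The residues b modulo nvol q\<close>

definition floor_sum :: "('n::finite \<Rightarrow> nat) \<Rightarrow> nat \<Rightarrow> nat" where
  "floor_sum q s = (\<Sum>i\<in>UNIV. q i * s div nvol q)"

definition weight :: "('n::finite \<Rightarrow> nat) \<Rightarrow> nat \<Rightarrow> nat" where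
  "weight q b = b - floor_sum q b"

lemma floor_sum_add_mult: "floor_sum q (b + c * nvol q) = floor_sum q b + c * sum q UNIV"
proof -
  have "q i * (b + c * nvol q) div nvol q = q i * b div nvol q + q i * c" for i
  proof -
    have "q i * (b + c * nvol q) = q i * b + (q i * c) * nvol q" by (simp add: algebra_simps)
    then show ?thesis using nvol_pos[of q] by simp
  qed
  then show ?thesis
    by (simp add: floor_sum_def sum.distrib sum_distrib_left mult.commute)
qed

lemma floor_sum_le: "floor_sum q b \<le> b"
proof -
  have "nvol q * floor_sum q b = (\<Sum>i\<in>UNIV. nvol q * (q i * b div nvol q))"
    by (simp add: floor_sum_def sum_distrib_left)
  also have "\<dots> \<le> (\<Sum>i\<in>UNIV. q i * b)"
    by (rule sum_mono) (simp add: times_div_less_eq_dividend)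
  also have "\<dots> \<le> nvol q * b"
    by (simp add: nvol_def sum_distrib_right[symmetric])
  finally show ?thesis using nvol_pos[of q] by simp
qed

lemma int_add_div_nonneg:
  fixes k x N :: int
  assumes "0 < N" "0 \<le> N * k + x"
  shows "0 \<le> k + x div N"
proof -
  have "0 \<le> (x + k * N) div N"
    using pos_imp_zdiv_nonneg_iff[OF assms(1)] assms(2) by (metis add.commute mult.commute)
  then show ?thesis using assms(1) by simp
qed

(* Shifting k_i by floor(q_i s / N), s = t - sum k, makes all coordinates natural numbers. *)
definition shifted_points :: "('n::finite \<Rightarrow> nat) \<Rightarrow> nat \<Rightarrow> (nat \<times> ('n \<Rightarrow> nat)) set" where
  "shifted_points q t = {(s, u). s + sum u UNIV = t + floor_sum q s}"

lemma sum_int_floor: "(\<Sum>i\<in>UNIV. int (q i * s div nvol q)) = int (floor_sum q s)"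
  by (simp add: floor_sum_def)

lemma shift_nonneg:
  assumes "simplex_ineqs q (int t) k"
  shows "0 \<le> k i + int (q i * nat (int t - sum k UNIV) div nvol q)"
proof -
  let ?s = "nat (int t - sum k UNIV)"
  have "int ?s = int t - sum k UNIV"
    using assms by (simp add: simplex_ineqs_def)
  then have "0 \<le> int (nvol q) * k i + int (q i * ?s)"
    using assms unfolding simplex_ineqs_def of_nat_mult by (metis mult.commute)
  then have "0 \<le> k i + int (q i * ?s) div int (nvol q)"
    using nvol_pos[of q] by (intro int_add_div_nonneg) simp_all
  then show ?thesis by (simp only: zdiv_int)
qed

lemma shift_in_shifted_points:
  assumes "simplex_ineqs q (int t) k"
  defines "s \<equiv> nat (int t - sum k UNIV)"
  shows "(s, \<lambda>i. nat (k i + int (q i * s div nvol q))) \<in> shifted_points q t"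
proof -
  have "int s = int t - sum k UNIV"
    using assms by (simp add: simplex_ineqs_def)
  moreover have "int (\<Sum>i\<in>UNIV. nat (k i + int (q i * s div nvol q))) = sum k UNIV + int (floor_sum q s)"
    using shift_nonneg[OF assms(1)] by (simp add: s_def sum.distrib sum_int_floor)
  ultimately have "int (s + (\<Sum>i\<in>UNIV. nat (k i + int (q i * s div nvol q)))) = int (t + floor_sum q s)"
    by (simp only: of_nat_add)
  then show ?thesis
    unfolding shifted_points_def of_nat_eq_iff by (simp only: mem_Collect_eq prod.case)
qed

lemma shifted_points_apex:
  assumes "(s, u) \<in> shifted_points q t"
  shows "int t - (\<Sum>i\<in>UNIV. int (u i) - int (q i * s div nvol q)) = int s"
proof -
  have "int (s + sum u UNIV) = int (t + floor_sum q s)"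
    using assms by (simp add: shifted_points_def)
  then have "int s + (\<Sum>i\<in>UNIV. int (u i)) = int t + int (floor_sum q s)" by simp
  then show ?thesis unfolding sum_subtractf sum_int_floor by linarith
qed

lemma unshift_simplex_ineqs:
  assumes "(s, u) \<in> shifted_points q t"
  shows "simplex_ineqs q (int t) (\<lambda>i. int (u i) - int (q i * s div nvol q))"
proof -
  have "0 \<le> int (nvol q) * (int (u i) - int (q i * s div nvol q)) + int s * int (q i)" for i
  proof -
    have "int (nvol q) * int (q i * s div nvol q) \<le> int s * int (q i)"
      by (metis of_nat_le_iff of_nat_mult times_div_less_eq_dividend mult.commute)
    moreover have "0 \<le> int (nvol q) * int (u i)" by simp
    ultimately show ?thesis unfolding right_diff_distrib by linarith
  qed
  then show ?thesis
    unfolding simplex_ineqs_def shifted_points_apex[OF assms] by simp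
qed

lemma card_simplex_ineqs_eq_shifted_points:
  "card {k. simplex_ineqs q (int t) k} = card (shifted_points q t)"
proof -
  let ?s = "\<lambda>k. nat (int t - sum k UNIV)"
  let ?f = "\<lambda>k. (?s k, \<lambda>i. nat (k i + int (q i * ?s k div nvol q)))"
  let ?g = "\<lambda>(s, u) i. int (u i) - int (q i * s div nvol q)"
  have "bij_betw ?f {k. simplex_ineqs q (int t) k} (shifted_points q t)"
  proof (rule bij_betwI[where g="?g"])
    show "?f \<in> {k. simplex_ineqs q (int t) k} \<rightarrow> shifted_points q t"
      using shift_in_shifted_points by (intro funcsetI) simp
    show "?g \<in> shifted_points q t \<rightarrow> {k. simplex_ineqs q (int t) k}"
    proof
      fix p assume "p \<in> shifted_points q t"
      moreover obtain s u where p: "p = (s, u)" by (cases p)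
      ultimately show "?g p \<in> {k. simplex_ineqs q (int t) k}"
        using unshift_simplex_ineqs by (simp only: prod.case mem_Collect_eq)
    qed
    show "?g (?f k) = k" if "k \<in> {k. simplex_ineqs q (int t) k}" for k
    proof
      fix i
      have "0 \<le> k i + int (q i * ?s k div nvol q)"
        using that by (intro shift_nonneg) simp
      then show "?g (?f k) i = k i" by simp
    qed
    show "?f (?g p) = p" if "p \<in> shifted_points q t" for p
    proof -
      obtain s u where p: "p = (s, u)" by (cases p)
      have "int t - (\<Sum>i\<in>UNIV. int (u i) - int (q i * s div nvol q)) = int s"
        by (rule shifted_points_apex) (use that p in simp)
      then show ?thesis using p by simp
    qed
  qed
  then show ?thesis by (rule bij_betw_same_card)
qed

(* s = b + c nvol q with b < nvol q; the quotient c becomes the extra coordinate None. *)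
lemma card_shifted_points:
  fixes q :: "'n::finite \<Rightarrow> nat"
  shows "card (shifted_points q t) = card (SIGMA b:{..<nvol q}. {v :: 'n option \<Rightarrow> nat. weight q b + sum v UNIV = t})"
proof -
  let ?T = "SIGMA b:{..<nvol q}. {v :: 'n option \<Rightarrow> nat. weight q b + sum v UNIV = t}"
  let ?N = "nvol q"
  let ?f = "\<lambda>(s, u). (s mod ?N, \<lambda>x. case x of None \<Rightarrow> s div ?N | Some i \<Rightarrow> u i)"
  let ?g = "\<lambda>(b, v). (b + v None * ?N, \<lambda>i. v (Some i))"
  have sum_option: "sum v UNIV = v None + (\<Sum>i\<in>UNIV. v (Some i))" for v :: "'n option \<Rightarrow> nat"
    by (simp add: UNIV_option_conv sum.reindex)
  have shifted_iff: "(b + c * ?N) + U = t + floor_sum q (b + c * ?N) \<longleftrightarrow> weight q b + (c + U) = t"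
    for b c U
  proof -
    have "c * ?N = c + c * sum q UNIV" by (simp add: nvol_def)
    then show ?thesis
      using floor_sum_add_mult[of q b c] floor_sum_le[of q b] unfolding weight_def by linarith
  qed
  have "bij_betw ?f (shifted_points q t) ?T"
  proof (rule bij_betwI[where g="?g"])
    show "?f \<in> shifted_points q t \<rightarrow> ?T"
    proof
      fix p assume p: "p \<in> shifted_points q t"
      obtain s u where su: "p = (s, u)" by (cases p)
      have "weight q (s mod ?N) + (s div ?N + sum u UNIV) = t"
        using shifted_iff[of "s mod ?N" "s div ?N" "sum u UNIV"] p su by (simp add: shifted_points_def)
      then show "?f p \<in> ?T"
        using nvol_pos[of q] su by (simp add: sum_option)
    qed
    show "?g \<in> ?T \<rightarrow> shifted_points q t"
      using shifted_iff by (auto simp: shifted_points_def sum_option)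
    show "?f (?g p) = p" if "p \<in> ?T" for p
      using that by (auto split: option.splits)
  qed auto
  then show ?thesis by (rule bij_betw_same_card)
qed

lemma lattice_count_simplex1q_sum:
  fixes q :: "'n::finite \<Rightarrow> nat"
  shows "int (lattice_count (simplex1q q) t) =
     (\<Sum>b<nvol q. if weight q b \<le> t
        then int (card (weak_compositions (UNIV :: 'n option set) (t - weight q b))) else 0)"
proof -
  have fibre: "{v :: 'n option \<Rightarrow> nat. weight q b + sum v UNIV = t}
      = (if weight q b \<le> t then weak_compositions UNIV (t - weight q b) else {})" for b
    by (auto simp: weak_compositions_def)
  have "finite {v :: 'n option \<Rightarrow> nat. weight q b + sum v UNIV = t}" for b
    unfolding fibre by (simp add: finite_weak_compositions)
  moreover have "int (card {v :: 'n option \<Rightarrow> nat. weight q b + sum v UNIV = t})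
      = (if weight q b \<le> t then int (card (weak_compositions (UNIV :: 'n option set) (t - weight q b)))
         else 0)" for b
    unfolding fibre by simp
  ultimately show ?thesis
    by (simp add: lattice_count_simplex1q card_simplex_ineqs_eq_shifted_points
        card_shifted_points card_SigmaI of_nat_sum)
qed

lemma aff_dim_simplex1q: "aff_dim (simplex1q (q :: 'n::finite \<Rightarrow> nat)) = int CARD('n)"
proof -
  have "insert 0 (Basis :: (real^'n) set) \<subseteq> simplex1q q"
    by (auto simp: simplex1q_eq simplex_ineqs_def Basis_vec_def axis_def)
  moreover have "aff_dim (insert 0 (Basis :: (real^'n) set)) = int DIM(real^'n)"
  proof -
    have "affine hull (insert 0 (Basis :: (real^'n) set)) = span (insert 0 Basis)"
      by (rule affine_hull_span_0) (simp add: hull_inc)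
    also have "\<dots> = UNIV" by (simp add: span_Basis)
    finally show ?thesis using aff_dim_eq_full by blast
  qed
  ultimately have "int CARD('n) \<le> aff_dim (simplex1q q)"
    using aff_dim_subset[of "insert 0 Basis" "simplex1q q"] by simp
  then show ?thesis
    using aff_dim_le_DIM[of "simplex1q q"] by simp
qed

theorem h_star_simplex1q:
  fixes q :: "'n::finite \<Rightarrow> nat"
  shows "h_star (simplex1q q) = (\<Sum>b<nvol q. monom 1 (weight q b))"
proof -
  let ?C = "Abs_fps (\<lambda>m. int (card (weak_compositions (UNIV :: 'n option set) m)))"
  let ?H = "\<Sum>b<nvol q. monom 1 (weight q b) :: int poly"
  have "ehrhart_series (simplex1q q) = fps_of_poly ?H * ?C"
  proof (rule fps_ext)
    fix t
    show "fps_nth (ehrhart_series (simplex1q q)) t = fps_nth (fps_of_poly ?H * ?C) t"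
      unfolding ehrhart_series_def fps_nth_Abs_fps lattice_count_simplex1q_sum
        fps_of_poly_sum fps_of_poly_monom' sum_distrib_right fps_sum_nth fps_X_power_mult_nth
      by (rule sum.cong) auto
  qed
  moreover have "?C * (1 - fps_X) ^ (CARD('n) + 1) = 1"
    using fps_weak_compositions_mult[of "UNIV :: 'n option set"]
    by (simp add: card_UNIV_option)
  ultimately have e: "ehrhart_series (simplex1q q) * (1 - fps_X) ^ (nat (aff_dim (simplex1q q)) + 1)
      = fps_of_poly ?H"
    by (simp add: aff_dim_simplex1q mult.assoc)
  show ?thesis
    unfolding h_star_def e by (rule the_equality) (auto simp: fps_of_poly_eq_iff)
qed

section \<open>Unimodality under multiplication by a geometric sum\<close>

definition peak :: "(nat \<Rightarrow> int) \<Rightarrow> nat \<Rightarrow> bool" where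
  "peak a t \<longleftrightarrow> (\<forall>i<t. a i \<le> a (Suc i)) \<and> (\<forall>i\<ge>t. a (Suc i) \<le> a i)"

lemma peak_imp_unimodal:
  assumes "peak (coeff p) t"
  shows "unimodal p"
  using assms unfolding unimodal_def peak_def
  by (cases "t \<le> degree p") (auto intro!: exI[of _ "min t (degree p)"])

lemma peak_mono:
  assumes "peak a t" "i \<le> j" "j \<le> t"
  shows "a i \<le> a j"
  using assms(2,3)
proof (induction j rule: dec_induct)
  case (step n)
  then have "a i \<le> a n" by simp
  moreover have "a n \<le> a (Suc n)" using assms(1) step by (simp add: peak_def)
  ultimately show ?case by simp
qed simp

lemma peak_antimono:
  assumes "peak a t" "t \<le> i" "i \<le> j"
  shows "a j \<le> a i"
  using assms(3)
proof (induction j rule: dec_induct)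
  case (step n)
  then have "a (Suc n) \<le> a n" using assms(1,2) by (simp add: peak_def)
  with step show ?case by simp
qed simp

lemma peak_of_increments:
  assumes "\<And>j. W (Suc j) = W j + d j" "\<And>i. i < j0 \<Longrightarrow> 0 \<le> d i" "\<And>i. j0 \<le> i \<Longrightarrow> d i \<le> 0"
  shows "peak W j0"
  unfolding peak_def using assms by (simp add: not_less)

definition zpow :: "nat \<Rightarrow> int poly" where
  "zpow k = monom 1 k"

definition geom :: "nat \<Rightarrow> int poly" where
  "geom k = (\<Sum>i<k. zpow i)"

lemma zpow_add: "zpow (i + j) = zpow i * zpow j"
  by (simp add: zpow_def mult_monom)

lemma geom_0 [simp]: "geom 0 = 0"
  by (simp add: geom_def)

lemma geom_Suc: "geom (Suc k) = geom k + zpow k"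
  by (simp add: geom_def)

lemma geom_add: "geom (a + b) = geom a + zpow a * geom b"
  by (induction b) (simp_all add: geom_Suc zpow_add algebra_simps)

lemma coeff_geom: "coeff (geom k) j = (if j < k then 1 else 0)"
  by (simp add: geom_def zpow_def coeff_sum)

lemma coeff_geom_nonneg: "0 \<le> coeff (geom k) j"
  by (simp add: coeff_geom)

lemma peak_geom: "peak (coeff (geom k)) 0"
  by (simp add: peak_def coeff_geom)

definition window_diff :: "nat \<Rightarrow> (nat \<Rightarrow> int) \<Rightarrow> nat \<Rightarrow> int" where
  "window_diff k a j = a (Suc j) - (if k \<le> j then a (j - k) else 0)"

lemma coeff_geom_mult: "coeff (geom (Suc k) * p) j = (\<Sum>l\<le>k. if l \<le> j then coeff p (j - l) else 0)"
  unfolding geom_def zpow_def sum_distrib_right coeff_sum lessThan_Suc_atMost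
  by (rule sum.cong) (auto simp: coeff_monom_mult)

lemma coeff_geom_mult_Suc:
  "coeff (geom (Suc k) * p) (Suc j) = coeff (geom (Suc k) * p) j + window_diff k (coeff p) j"
proof (induction k)
  case (Suc k)
  then show ?case
    unfolding coeff_geom_mult[of "Suc k"] coeff_geom_mult[of k] window_diff_def
    by (auto simp: Suc_diff_le)
qed (simp add: coeff_geom_mult window_diff_def)

lemma window_diff_nonpos_after:
  assumes nonneg: "\<And>i. 0 \<le> a i" and pk: "peak a t"
    and neg: "window_diff k a j0 < 0" and "j0 \<le> i"
  shows "window_diff k a i \<le> 0"
proof (cases "k \<le> i \<and> t \<le> i - k")
  case True
  then show ?thesis using peak_antimono[OF pk, of "i - k" "Suc i"] by (simp add: window_diff_def)
next
  case False
  have "t \<le> j0"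
  proof (rule ccontr)
    assume "\<not> t \<le> j0"
    then have "0 \<le> window_diff k a j0"
      using nonneg peak_mono[OF pk, of "j0 - k" "Suc j0"] by (simp add: window_diff_def)
    with neg show False by simp
  qed
  then have "a (Suc i) \<le> a (Suc j0)"
    using peak_antimono[OF pk, of "Suc j0" "Suc i"] \<open>j0 \<le> i\<close> by simp
  moreover have "(if k \<le> j0 then a (j0 - k) else 0) \<le> (if k \<le> i then a (i - k) else 0)"
    using False \<open>j0 \<le> i\<close> nonneg peak_mono[OF pk, of "j0 - k" "i - k"] by auto
  ultimately have "window_diff k a i \<le> window_diff k a j0"
    by (simp add: window_diff_def)
  with neg show ?thesis by simp
qed

lemma peak_geom_mult:
  assumes nonneg: "\<And>j. 0 \<le> coeff p j" and pk: "peak (coeff p) t"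
  shows "\<exists>t'. peak (coeff (geom (Suc k) * p)) t'"
proof -
  let ?d = "window_diff k (coeff p)"
  have late: "?d i \<le> 0" if "t + k \<le> i" for i
    using that peak_antimono[OF pk, of "i - k" "Suc i"] by (simp add: window_diff_def)
  obtain j0 where j0: "\<And>i. i < j0 \<Longrightarrow> 0 \<le> ?d i" "\<And>i. j0 \<le> i \<Longrightarrow> ?d i \<le> 0"
  proof (cases "\<exists>j. ?d j < 0")
    case True
    show ?thesis
    proof
      show "0 \<le> ?d i" if "i < (LEAST j. ?d j < 0)" for i
        using not_less_Least[OF that] by simp
      show "?d i \<le> 0" if "(LEAST j. ?d j < 0) \<le> i" for i
        using window_diff_nonpos_after[OF nonneg pk LeastI_ex[OF True] that] .
    qed
  next
    case False
    then show ?thesis using late that[of "t + k"] by (simp add: not_less)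
  qed
  have "peak (coeff (geom (Suc k) * p)) j0"
    by (rule peak_of_increments[where d = ?d]) (use j0 coeff_geom_mult_Suc in auto)
  then show ?thesis ..
qed

lemma coeff_geom_mult_nonneg:
  assumes "\<And>j. 0 \<le> coeff p j"
  shows "0 \<le> coeff (geom (Suc k) * p) j"
  unfolding coeff_geom_mult using assms by (intro sum_nonneg) auto

lemma unimodal_geom_mult:
  assumes "\<And>j. 0 \<le> coeff p j" "peak (coeff p) t"
  shows "unimodal (geom (Suc k) * p)"
  using peak_geom_mult[OF assms] peak_imp_unimodal by blast

section \<open>The polynomial [a+y+1] + (y+2) z [a][y]\<close>

definition digit_sum :: "nat \<Rightarrow> nat \<Rightarrow> nat" where
  "digit_sum m s = s div m + s mod m"

definition digit_poly :: "nat \<Rightarrow> nat \<Rightarrow> int poly" where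
  "digit_poly a y = geom (a + Suc y) + (of_nat y + 2) * (zpow 1 * geom y * geom a)"

lemma sum_lessThan_add: "(\<Sum>b<m + n. f b) = (\<Sum>b<m. f b) + (\<Sum>d<n. f (m + d :: nat))"
  by (induction n) (simp_all add: add.assoc)

lemma sum_lessThan_mult: "(\<Sum>b<a * n. f b) = (\<Sum>c<a. \<Sum>d<n. f (c * n + d :: nat))"
proof (induction a)
  case (Suc a)
  have "(\<Sum>b<Suc a * n. f b) = (\<Sum>b<a * n + n. f b)" by (simp add: add.commute)
  also have "\<dots> = (\<Sum>b<a * n. f b) + (\<Sum>d<n. f (a * n + d))" by (rule sum_lessThan_add)
  finally show ?case using Suc by simp
qed simp

lemma digit_sum_add_mult: "0 < m \<Longrightarrow> digit_sum m (s + c * m) = c + digit_sum m s"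
  by (simp add: digit_sum_def)

lemma sum_zpow_digit_sum_long:
  assumes "\<alpha> < Suc y"
  shows "(\<Sum>\<beta><Suc (a * Suc y). zpow (digit_sum (Suc y) (\<alpha> + \<beta>)))
     = geom a * (\<Sum>\<beta><Suc y. zpow (digit_sum (Suc y) (\<alpha> + \<beta>))) + zpow (a + \<alpha>)"
proof -
  let ?m = "Suc y"
  have "(\<Sum>\<beta><Suc (a * ?m). zpow (digit_sum ?m (\<alpha> + \<beta>)))
      = (\<Sum>\<beta><a * ?m. zpow (digit_sum ?m (\<alpha> + \<beta>))) + zpow (digit_sum ?m (\<alpha> + a * ?m))"
    by simp
  also have "(\<Sum>\<beta><a * ?m. zpow (digit_sum ?m (\<alpha> + \<beta>)))
      = (\<Sum>c<a. \<Sum>d<?m. zpow (digit_sum ?m (\<alpha> + (c * ?m + d))))"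
    by (rule sum_lessThan_mult)
  also have "\<dots> = (\<Sum>c<a. \<Sum>d<?m. zpow c * zpow (digit_sum ?m (\<alpha> + d)))"
  proof (intro sum.cong refl)
    fix c d
    have "digit_sum ?m (\<alpha> + (c * ?m + d)) = c + digit_sum ?m (\<alpha> + d)"
      using digit_sum_add_mult[of ?m "\<alpha> + d" c] by (simp add: algebra_simps)
    then show "zpow (digit_sum ?m (\<alpha> + (c * ?m + d))) = zpow c * zpow (digit_sum ?m (\<alpha> + d))"
      by (simp add: zpow_add)
  qed
  also have "\<dots> = geom a * (\<Sum>\<beta><?m. zpow (digit_sum ?m (\<alpha> + \<beta>)))"
    by (simp only: geom_def sum_product)
  also have "digit_sum ?m (\<alpha> + a * ?m) = a + \<alpha>"
    using digit_sum_add_mult[of ?m \<alpha> a] assms by (simp add: digit_sum_def)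
  finally show ?thesis .
qed

lemma sum_zpow_digit_sum_short:
  assumes "\<alpha> < Suc y"
  shows "(\<Sum>\<beta><Suc y. zpow (digit_sum (Suc y) (\<alpha> + \<beta>)))
     = zpow \<alpha> * geom (Suc y - \<alpha>) + zpow 1 * geom \<alpha>"
proof -
  let ?m = "Suc y"
  have "(\<Sum>\<beta><?m. zpow (digit_sum ?m (\<alpha> + \<beta>))) = (\<Sum>\<beta><(?m - \<alpha>) + \<alpha>. zpow (digit_sum ?m (\<alpha> + \<beta>)))"
    using assms by simp
  also have "\<dots> = (\<Sum>\<beta><?m - \<alpha>. zpow (digit_sum ?m (\<alpha> + \<beta>)))
      + (\<Sum>j<\<alpha>. zpow (digit_sum ?m (\<alpha> + (?m - \<alpha> + j))))"
    by (rule sum_lessThan_add)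
  also have "(\<Sum>\<beta><?m - \<alpha>. zpow (digit_sum ?m (\<alpha> + \<beta>))) = (\<Sum>\<beta><?m - \<alpha>. zpow \<alpha> * zpow \<beta>)"
    by (intro sum.cong refl) (auto simp: digit_sum_def zpow_add)
  also have "\<dots> = zpow \<alpha> * geom (?m - \<alpha>)"
    by (simp only: geom_def sum_distrib_left)
  also have "(\<Sum>j<\<alpha>. zpow (digit_sum ?m (\<alpha> + (?m - \<alpha> + j)))) = (\<Sum>j<\<alpha>. zpow 1 * zpow j)"
  proof (intro sum.cong refl)
    fix j assume "j \<in> {..<\<alpha>}"
    then have j: "j < ?m" using assms by simp
    have "\<alpha> + (?m - \<alpha> + j) = j + 1 * ?m" using assms by simp
    then have "digit_sum ?m (\<alpha> + (?m - \<alpha> + j)) = 1 + digit_sum ?m j"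
      by (simp only: digit_sum_add_mult zero_less_Suc)
    also have "digit_sum ?m j = j" using j by (simp add: digit_sum_def)
    finally show "zpow (digit_sum ?m (\<alpha> + (?m - \<alpha> + j))) = zpow 1 * zpow j"
      by (simp only: zpow_add)
  qed
  also have "\<dots> = zpow 1 * geom \<alpha>"
    by (simp only: geom_def sum_distrib_left)
  finally show ?thesis .
qed

lemma sum_geom_windows:
  "(\<Sum>\<alpha><Suc y. zpow \<alpha> * geom (Suc y - \<alpha>) + zpow 1 * geom \<alpha>) = 1 + (of_nat y + 2) * (zpow 1 * geom y)"
proof (induction y)
  case 0
  then show ?case by (simp add: geom_def zpow_def)
next
  case (Suc y)
  have shift: "zpow \<alpha> * geom (Suc (Suc y) - \<alpha>) = zpow \<alpha> * geom (Suc y - \<alpha>) + zpow (Suc y)"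
    if "\<alpha> < Suc y" for \<alpha>
  proof -
    have "Suc (Suc y) - \<alpha> = Suc (Suc y - \<alpha>)" using that by simp
    then have "zpow \<alpha> * geom (Suc (Suc y) - \<alpha>) = zpow \<alpha> * (geom (Suc y - \<alpha>) + zpow (Suc y - \<alpha>))"
      by (simp add: geom_Suc)
    also have "\<dots> = zpow \<alpha> * geom (Suc y - \<alpha>) + zpow (Suc y)"
      using that by (simp add: distrib_left zpow_add[symmetric])
    finally show ?thesis .
  qed
  have "(\<Sum>\<alpha><Suc (Suc y). zpow \<alpha> * geom (Suc (Suc y) - \<alpha>) + zpow 1 * geom \<alpha>)
      = (\<Sum>\<alpha><Suc y. zpow \<alpha> * geom (Suc (Suc y) - \<alpha>) + zpow 1 * geom \<alpha>)
        + (zpow (Suc y) * geom 1 + zpow 1 * geom (Suc y))"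
    by simp
  also have "(\<Sum>\<alpha><Suc y. zpow \<alpha> * geom (Suc (Suc y) - \<alpha>) + zpow 1 * geom \<alpha>)
      = (\<Sum>\<alpha><Suc y. (zpow \<alpha> * geom (Suc y - \<alpha>) + zpow 1 * geom \<alpha>) + zpow (Suc y))"
    by (intro sum.cong refl) (simp add: shift)
  also have "\<dots> = (\<Sum>\<alpha><Suc y. zpow \<alpha> * geom (Suc y - \<alpha>) + zpow 1 * geom \<alpha>)
      + of_nat (Suc y) * zpow (Suc y)"
    by (simp only: sum.distrib sum_constant card_lessThan of_nat_def)
  also have "geom 1 = 1" by (simp add: geom_def zpow_def)
  also have "zpow 1 * geom (Suc y) = zpow 1 * geom y + zpow (Suc y)"
    by (simp add: geom_Suc distrib_left zpow_add[symmetric])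
  finally show ?case
    unfolding Suc.IH by (simp add: geom_Suc zpow_add[symmetric] algebra_simps)
qed

lemma sum_zpow_digit_sum:
  "(\<Sum>\<alpha><Suc y. \<Sum>\<beta><Suc (a * Suc y). zpow (digit_sum (Suc y) (\<alpha> + \<beta>))) = digit_poly a y"
proof -
  have "(\<Sum>\<alpha><Suc y. \<Sum>\<beta><Suc (a * Suc y). zpow (digit_sum (Suc y) (\<alpha> + \<beta>)))
      = (\<Sum>\<alpha><Suc y. geom a * (zpow \<alpha> * geom (Suc y - \<alpha>) + zpow 1 * geom \<alpha>) + zpow a * zpow \<alpha>)"
  proof (intro sum.cong refl)
    fix \<alpha> assume "\<alpha> \<in> {..<Suc y}"
    then have \<alpha>: "\<alpha> < Suc y" by simp
    show "(\<Sum>\<beta><Suc (a * Suc y). zpow (digit_sum (Suc y) (\<alpha> + \<beta>)))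
        = geom a * (zpow \<alpha> * geom (Suc y - \<alpha>) + zpow 1 * geom \<alpha>) + zpow a * zpow \<alpha>"
      by (simp only: sum_zpow_digit_sum_long[OF \<alpha>] sum_zpow_digit_sum_short[OF \<alpha>] zpow_add)
  qed
  also have "\<dots> = geom a * (\<Sum>\<alpha><Suc y. zpow \<alpha> * geom (Suc y - \<alpha>) + zpow 1 * geom \<alpha>)
      + zpow a * geom (Suc y)"
    by (simp only: sum.distrib sum_distrib_left[symmetric] geom_def[symmetric])
  also have "\<dots> = digit_poly a y"
    unfolding sum_geom_windows digit_poly_def geom_add[of a "Suc y"] by (simp add: algebra_simps)
  finally show ?thesis .
qed

lemma coeff_geom_mult_geom: "coeff (geom y * geom a) i = int (min y (Suc i) - (Suc i - a))"
proof (induction y)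
  case (Suc y)
  have "coeff (geom (Suc y) * geom a) i = coeff (geom y * geom a) i + coeff (monom 1 y * geom a) i"
    by (simp add: geom_Suc zpow_def algebra_simps)
  also have "\<dots> = int (min y (Suc i) - (Suc i - a)) + (if i < y then 0 else if i - y < a then 1 else 0)"
    using Suc by (simp add: coeff_monom_mult coeff_geom)
  also have "\<dots> = int (min (Suc y) (Suc i) - (Suc i - a))"
    by (auto simp: min_def)
  finally show ?case .
qed (simp add: geom_def)

lemma coeff_digit_poly:
  "coeff (digit_poly a y) j = (if j < a + Suc y then 1 else 0) + (int y + 2) * int (min y j - (j - a))"
proof -
  have "coeff (zpow 1 * geom y * geom a) j = int (min y j - (j - a))"
    by (cases j) (simp_all add: zpow_def mult.assoc coeff_monom_mult coeff_geom_mult_geom)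
  moreover have "(of_nat y + 2) * p = smult (int y + 2) p" for p :: "int poly"
    using of_nat_mult_conv_smult[of "y + 2" p] by (simp add: add.commute)
  ultimately show ?thesis
    by (simp add: digit_poly_def coeff_geom)
qed

lemma digit_poly_nonneg: "0 \<le> coeff (digit_poly a y) j"
  by (simp add: coeff_digit_poly)

lemma peak_digit_poly: "peak (coeff (digit_poly a y)) ((a + y) div 2)"
  unfolding peak_def coeff_digit_poly
proof (intro conjI allI impI)
  fix j assume j: "j < (a + y) div 2"
  have "(if j < a + Suc y then 1 else 0) \<le> (if Suc j < a + Suc y then 1 else (0::int))"
    using j by auto
  moreover have "int (min y j - (j - a)) \<le> int (min y (Suc j) - (Suc j - a))"
    unfolding of_nat_le_iff using j by (auto simp: min_def)
  then have "(int y + 2) * int (min y j - (j - a)) \<le> (int y + 2) * int (min y (Suc j) - (Suc j - a))"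
    by (rule mult_left_mono) simp
  ultimately show "(if j < a + Suc y then 1 else 0) + (int y + 2) * int (min y j - (j - a))
      \<le> (if Suc j < a + Suc y then 1 else 0) + (int y + 2) * int (min y (Suc j) - (Suc j - a))"
    by (rule add_mono)
next
  fix j assume j: "(a + y) div 2 \<le> j"
  have "(if Suc j < a + Suc y then 1 else 0) \<le> (if j < a + Suc y then 1 else (0::int))"
    by auto
  moreover have "int (min y (Suc j) - (Suc j - a)) \<le> int (min y j - (j - a))"
    unfolding of_nat_le_iff using j by (auto simp: min_def)
  then have "(int y + 2) * int (min y (Suc j) - (Suc j - a)) \<le> (int y + 2) * int (min y j - (j - a))"
    by (rule mult_left_mono) simp
  ultimately show "(if Suc j < a + Suc y then 1 else 0) + (int y + 2) * int (min y (Suc j) - (Suc j - a))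
      \<le> (if j < a + Suc y then 1 else 0) + (int y + 2) * int (min y j - (j - a))"
    by (rule add_mono)
qed

section \<open>The three families\<close>

lemma sum_qvec:
  fixes enum :: "nat \<Rightarrow> 'n::finite"
  assumes "bij_betw enum {..<x1 + x2 + x3} (UNIV :: 'n set)"
  shows "(\<Sum>i\<in>UNIV. g (qvec r1 r2 r3 x1 x2 x3 (inv_into {..<x1 + x2 + x3} enum i)))
     = x1 * g r1 + x2 * g r2 + x3 * g r3"
proof -
  have "(\<Sum>i\<in>UNIV. g (qvec r1 r2 r3 x1 x2 x3 (inv_into {..<x1 + x2 + x3} enum i)))
      = (\<Sum>j<x1 + x2 + x3. g (qvec r1 r2 r3 x1 x2 x3 j))"
    using sum.reindex_bij_betw[OF bij_betw_inv_into[OF assms]] by simp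
  also have "\<dots> = x1 * g r1 + x2 * g r2 + x3 * g r3"
    by (simp add: sum_lessThan_add qvec_def)
  finally show ?thesis .
qed

lemma h_star_qvec:
  fixes enum :: "nat \<Rightarrow> 'n::finite"
  assumes "bij_betw enum {..<x1 + x2 + x3} (UNIV :: 'n set)"
    and "N = 1 + x1 * r1 + x2 * r2 + x3 * r3"
  shows "h_star (simplex1q (\<lambda>i. qvec r1 r2 r3 x1 x2 x3 (inv_into {..<x1 + x2 + x3} enum i)))
    = (\<Sum>b<N. zpow (b - (x1 * (r1 * b div N) + x2 * (r2 * b div N) + x3 * (r3 * b div N))))"
proof -
  let ?q = "\<lambda>i. qvec r1 r2 r3 x1 x2 x3 (inv_into {..<x1 + x2 + x3} enum i)"
  have N: "nvol ?q = N"
    using sum_qvec[OF assms(1), of id] assms(2) by (simp add: nvol_def)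
  have "floor_sum ?q b = x1 * (r1 * b div N) + x2 * (r2 * b div N) + x3 * (r3 * b div N)" for b
    using sum_qvec[OF assms(1), of "\<lambda>r. r * b div N"] by (simp add: floor_sum_def N)
  then show ?thesis
    by (simp add: h_star_simplex1q weight_def N zpow_def)
qed

lemma add_mult_less_mult:
  fixes c d B C :: nat
  assumes "c < B" "d < C"
  shows "c * C + d < B * C"
proof -
  have "c * C + d < Suc c * C" using assms(2) by simp
  also have "\<dots> \<le> B * C" using assms(1) by (intro mult_right_mono) auto
  finally show ?thesis .
qed

lemma mult_add_div:
  fixes c d C :: nat
  assumes "d < C"
  shows "(c * C + d) div C = c"
  using assms by simp

lemma diff_eq_if_add_eq_int:
  fixes b D w :: nat
  assumes "int D + int w = int b"
  shows "b - D = w"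
  using assms by linarith

lemma weight_case_i:
  fixes x1 x2 x3 b c e f :: nat
  assumes h1: "c < Suc x1" and h2: "e < Suc x2" and h3: "f < Suc x3"
    and b: "b = c * (Suc x2 * Suc x3) + (e * Suc x3 + f)"
  shows "b - (x1 * (1 * b div (Suc x1 * (Suc x2 * Suc x3)))
             + x2 * (Suc x1 * b div (Suc x1 * (Suc x2 * Suc x3)))
             + x3 * (Suc x1 * Suc x2 * b div (Suc x1 * (Suc x2 * Suc x3))))
    = c + (e + f)"
proof -
  let ?N = "Suc x1 * (Suc x2 * Suc x3)"
  have low: "e * Suc x3 + f < Suc x2 * Suc x3" using h2 h3 by (rule add_mult_less_mult)
  have "b < ?N" unfolding b using h1 low by (rule add_mult_less_mult)
  then have d1: "1 * b div ?N = 0" by simp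
  have "Suc x1 * b div ?N = b div (Suc x2 * Suc x3)" by (rule div_mult_mult1) simp
  also have "\<dots> = c" unfolding b using low by (rule mult_add_div)
  finally have d2: "Suc x1 * b div ?N = c" .
  have "Suc x1 * Suc x2 * b div ?N = b div Suc x3"
    by (simp only: mult.assoc[symmetric]) (rule div_mult_mult1, simp)
  also have "\<dots> = c * Suc x2 + e"
  proof -
    have "b = (c * Suc x2 + e) * Suc x3 + f" using b by (simp add: algebra_simps)
    then show ?thesis using h3 by (simp only: mult_add_div)
  qed
  finally have d3: "Suc x1 * Suc x2 * b div ?N = c * Suc x2 + e" .
  show ?thesis unfolding d1 d2 d3
    by (rule diff_eq_if_add_eq_int) (simp add: b algebra_simps)
qed

lemma weight_case_ii:
  fixes x1 x2 x3 b \<alpha> \<beta> d :: nat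
  assumes h1: "\<alpha> < Suc x2" and h2: "\<beta> < Suc (x1 * Suc x2)" and h3: "d < Suc x3"
    and b: "b = (\<alpha> * Suc (x1 * Suc x2) + \<beta>) * Suc x3 + d"
  shows "b - (x1 * (Suc x2 * b div (Suc x2 * Suc (x1 * Suc x2) * Suc x3))
             + x2 * (Suc (x1 * Suc x2) * b div (Suc x2 * Suc (x1 * Suc x2) * Suc x3))
             + x3 * (Suc (x1 * Suc x2) * Suc x2 * b div (Suc x2 * Suc (x1 * Suc x2) * Suc x3)))
    = digit_sum (Suc x2) (\<alpha> + \<beta>) + d"
proof -
  let ?m = "Suc x2" and ?P = "Suc (x1 * Suc x2)" and ?p = "Suc x3"
  let ?N = "?m * ?P * ?p"
  define Q where "Q = (\<alpha> + \<beta>) div ?m"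
  define R where "R = (\<alpha> + \<beta>) mod ?m"
  have low: "\<beta> * ?p + d < ?P * ?p" using h2 h3 by (rule add_mult_less_mult)
  have b_p: "b div ?p = \<alpha> * ?P + \<beta>" unfolding b using h3 by (rule mult_add_div)
  have "?m * b div ?N = b div (?P * ?p)"
    by (simp only: mult.assoc) (rule div_mult_mult1, simp)
  also have "\<dots> = \<alpha>"
  proof -
    have "b = \<alpha> * (?P * ?p) + (\<beta> * ?p + d)" using b by (simp add: algebra_simps)
    then show ?thesis using low by (simp only: mult_add_div)
  qed
  finally have d1: "?m * b div ?N = \<alpha>" .
  have "?P * b div ?N = ?P * b div (?P * (?p * ?m))" by (simp only: ac_simps)
  also have "\<dots> = b div (?p * ?m)" by (rule div_mult_mult1) simp
  also have "\<dots> = (\<alpha> * ?P + \<beta>) div ?m" by (simp only: div_mult2_eq b_p)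
  also have "\<dots> = ((\<alpha> + \<beta>) + \<alpha> * x1 * ?m) div ?m"
    by (rule arg_cong[where f = "\<lambda>n. n div ?m"]) (simp add: algebra_simps)
  also have "\<dots> = \<alpha> * x1 + Q"
    unfolding Q_def by (rule div_mult_self1) simp
  finally have d2: "?P * b div ?N = \<alpha> * x1 + Q" .
  have "?P * ?m * b div ?N = (?m * ?P) * b div ((?m * ?P) * ?p)" by (simp only: ac_simps)
  also have "\<dots> = \<alpha> * ?P + \<beta>" unfolding b_p[symmetric] by (rule div_mult_mult1) simp
  finally have d3: "?P * ?m * b div ?N = \<alpha> * ?P + \<beta>" .
  have "int (\<alpha> + \<beta>) = int (Q * ?m + R)"
    unfolding Q_def R_def by (simp only: div_mult_mod_eq)
  then have "int \<alpha> + int \<beta> = int Q * (1 + int x2) + int R" by (simp add: algebra_simps)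
  then show ?thesis unfolding d1 d2 d3 digit_sum_def Q_def[symmetric] R_def[symmetric]
    by (intro diff_eq_if_add_eq_int) (simp add: b, algebra)
qed

lemma weight_case_iv:
  fixes x1 x2 x3 b c \<alpha> \<beta> :: nat
  assumes h1: "c < Suc x1" and h2: "\<alpha> < Suc x3" and h3: "\<beta> < Suc (x2 * Suc x3)"
    and b: "b = c * (Suc x3 * Suc (x2 * Suc x3)) + (\<alpha> * Suc (x2 * Suc x3) + \<beta>)"
  shows "b - (x1 * (1 * b div (Suc x1 * (Suc x3 * Suc (x2 * Suc x3))))
             + x2 * (Suc x1 * Suc x3 * b div (Suc x1 * (Suc x3 * Suc (x2 * Suc x3))))
             + x3 * (Suc x1 * Suc (x2 * Suc x3) * b div (Suc x1 * (Suc x3 * Suc (x2 * Suc x3)))))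
    = c + digit_sum (Suc x3) (\<alpha> + \<beta>)"
proof -
  let ?m = "Suc x3" and ?M = "Suc (x2 * Suc x3)"
  let ?N = "Suc x1 * (?m * ?M)"
  define Q where "Q = (\<alpha> + \<beta>) div ?m"
  define R where "R = (\<alpha> + \<beta>) mod ?m"
  have low: "\<alpha> * ?M + \<beta> < ?m * ?M" using h2 h3 by (rule add_mult_less_mult)
  have "b < ?N" unfolding b using h1 low by (rule add_mult_less_mult)
  then have d1: "1 * b div ?N = 0" by simp
  have "Suc x1 * ?m * b div ?N = b div ?M"
    by (simp only: mult.assoc[symmetric]) (rule div_mult_mult1, simp)
  also have "\<dots> = c * ?m + \<alpha>"
  proof -
    have "b = (c * ?m + \<alpha>) * ?M + \<beta>" using b by (simp add: algebra_simps)
    then show ?thesis using h3 by (simp only: mult_add_div)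
  qed
  finally have d2: "Suc x1 * ?m * b div ?N = c * ?m + \<alpha>" .
  have "Suc x1 * ?M * b div ?N = (Suc x1 * ?M) * b div ((Suc x1 * ?M) * ?m)" by (simp only: ac_simps)
  also have "\<dots> = b div ?m" by (rule div_mult_mult1) simp
  also have "\<dots> = ((\<alpha> + \<beta>) + (c * ?M + \<alpha> * x2) * ?m) div ?m"
    by (rule arg_cong[where f = "\<lambda>n. n div ?m"]) (simp add: b algebra_simps)
  also have "\<dots> = c * ?M + \<alpha> * x2 + Q"
    unfolding Q_def by (rule div_mult_self1) simp
  finally have d3: "Suc x1 * ?M * b div ?N = c * ?M + \<alpha> * x2 + Q" .
  have "int (\<alpha> + \<beta>) = int (Q * ?m + R)"
    unfolding Q_def R_def by (simp only: div_mult_mod_eq)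
  then have "int \<alpha> + int \<beta> = int Q * (1 + int x3) + int R" by (simp add: algebra_simps)
  then show ?thesis unfolding d1 d2 d3 digit_sum_def Q_def[symmetric] R_def[symmetric]
    by (intro diff_eq_if_add_eq_int) (simp add: b, algebra)
qed

lemma h_star_case_i:
  fixes enum :: "nat \<Rightarrow> 'n::finite"
  assumes "bij_betw enum {..<x1 + x2 + x3} (UNIV :: 'n set)"
  shows "h_star (simplex1q (\<lambda>i. qvec 1 (1 + x1) ((1 + x1) * (1 + x2)) x1 x2 x3
           (inv_into {..<x1 + x2 + x3} enum i))) = geom (Suc x1) * (geom (Suc x2) * geom (Suc x3))"
  unfolding plus_1_eq_Suc
proof -
  let ?N = "Suc x1 * (Suc x2 * Suc x3)"
  have "h_star (simplex1q (\<lambda>i. qvec 1 (Suc x1) (Suc x1 * Suc x2) x1 x2 x3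
           (inv_into {..<x1 + x2 + x3} enum i)))
      = (\<Sum>b<?N. zpow (b - (x1 * (1 * b div ?N) + x2 * (Suc x1 * b div ?N)
          + x3 * (Suc x1 * Suc x2 * b div ?N))))"
    by (rule h_star_qvec[OF assms]) (simp add: algebra_simps)
  also have "\<dots> = (\<Sum>c<Suc x1. \<Sum>e<Suc x2. \<Sum>f<Suc x3. zpow c * (zpow e * zpow f))"
    unfolding sum_lessThan_mult
    by (intro sum.cong refl) (simp only: lessThan_iff weight_case_i[OF _ _ _ refl] zpow_add)
  also have "\<dots> = geom (Suc x1) * (geom (Suc x2) * geom (Suc x3))"
    unfolding geom_def sum_distrib_right by (simp only: sum_distrib_left)
  finally show "h_star (simplex1q (\<lambda>i. qvec 1 (Suc x1) (Suc x1 * Suc x2) x1 x2 x3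
           (inv_into {..<x1 + x2 + x3} enum i))) = geom (Suc x1) * (geom (Suc x2) * geom (Suc x3))" .
qed

lemma h_star_case_ii:
  fixes enum :: "nat \<Rightarrow> 'n::finite"
  assumes "bij_betw enum {..<x1 + x2 + x3} (UNIV :: 'n set)"
  shows "h_star (simplex1q (\<lambda>i. qvec (1 + x2) (1 + x1 * (1 + x2)) ((1 + x1 * (1 + x2)) * (1 + x2))
           x1 x2 x3 (inv_into {..<x1 + x2 + x3} enum i))) = geom (Suc x3) * digit_poly x1 x2"
  unfolding plus_1_eq_Suc
proof -
  let ?m = "Suc x2" and ?P = "Suc (x1 * Suc x2)" and ?p = "Suc x3"
  let ?N = "?m * ?P * ?p"
  have "h_star (simplex1q (\<lambda>i. qvec ?m ?P (?P * ?m) x1 x2 x3 (inv_into {..<x1 + x2 + x3} enum i)))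
      = (\<Sum>b<?N. zpow (b - (x1 * (?m * b div ?N) + x2 * (?P * b div ?N) + x3 * (?P * ?m * b div ?N))))"
    by (rule h_star_qvec[OF assms]) (simp add: algebra_simps)
  also have "\<dots> = (\<Sum>\<alpha><?m. \<Sum>\<beta><?P. \<Sum>d<?p. zpow (digit_sum ?m (\<alpha> + \<beta>)) * zpow d)"
    unfolding sum_lessThan_mult
    by (intro sum.cong refl) (simp only: lessThan_iff weight_case_ii[OF _ _ _ refl] zpow_add)
  also have "\<dots> = digit_poly x1 x2 * geom ?p"
    unfolding sum_zpow_digit_sum[symmetric] geom_def sum_distrib_right by (simp only: sum_distrib_left)
  finally show "h_star (simplex1q (\<lambda>i. qvec ?m ?P (?P * ?m) x1 x2 x3 (inv_into {..<x1 + x2 + x3} enum i)))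
      = geom ?p * digit_poly x1 x2" by (simp only: mult.commute)
qed

lemma h_star_case_iv:
  fixes enum :: "nat \<Rightarrow> 'n::finite"
  assumes "bij_betw enum {..<x1 + x2 + x3} (UNIV :: 'n set)"
  shows "h_star (simplex1q (\<lambda>i. qvec 1 ((1 + x1) * (1 + x3)) ((1 + x1) * (1 + x2 * (1 + x3)))
           x1 x2 x3 (inv_into {..<x1 + x2 + x3} enum i))) = geom (Suc x1) * digit_poly x2 x3"
  unfolding plus_1_eq_Suc
proof -
  let ?m = "Suc x3" and ?M = "Suc (x2 * Suc x3)"
  let ?N = "Suc x1 * (?m * ?M)"
  have "h_star (simplex1q (\<lambda>i. qvec 1 (Suc x1 * ?m) (Suc x1 * ?M) x1 x2 x3
           (inv_into {..<x1 + x2 + x3} enum i)))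
      = (\<Sum>b<?N. zpow (b - (x1 * (1 * b div ?N) + x2 * (Suc x1 * ?m * b div ?N)
          + x3 * (Suc x1 * ?M * b div ?N))))"
    by (rule h_star_qvec[OF assms]) (simp add: algebra_simps)
  also have "\<dots> = (\<Sum>c<Suc x1. \<Sum>\<alpha><?m. \<Sum>\<beta><?M. zpow c * zpow (digit_sum ?m (\<alpha> + \<beta>)))"
    unfolding sum_lessThan_mult
    by (intro sum.cong refl) (simp only: lessThan_iff weight_case_iv[OF _ _ _ refl] zpow_add)
  also have "\<dots> = geom (Suc x1) * digit_poly x2 x3"
    unfolding sum_zpow_digit_sum[symmetric] geom_def sum_distrib_right by (simp only: sum_distrib_left)
  finally show "h_star (simplex1q (\<lambda>i. qvec 1 (Suc x1 * ?m) (Suc x1 * ?M) x1 x2 x3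
           (inv_into {..<x1 + x2 + x3} enum i))) = geom (Suc x1) * digit_poly x2 x3" .
qed

theorem theorem4p6:
  fixes x1 x2 x3 r1 r2 r3 :: nat and enum :: "nat \<Rightarrow> 'n::finite"
  assumes "x1 \<ge> 1" "x2 \<ge> 1" "x3 \<ge> 1"
    and "bij_betw enum {..<x1 + x2 + x3} (UNIV :: 'n set)"
    and "(r1, r2, r3) = (1, 1 + x1, (1 + x1) * (1 + x2))
       \<or> (r1, r2, r3) = (1 + x2, 1 + x1 * (1 + x2), (1 + x1 * (1 + x2)) * (1 + x2))
       \<or> (r1, r2, r3) = (1, (1 + x1) * (1 + x3), (1 + x1) * (1 + x2 * (1 + x3)))"
  shows "unimodal (h_star (simplex1q
           (\<lambda>i. qvec r1 r2 r3 x1 x2 x3 (inv_into {..<x1 + x2 + x3} enum i))))"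
  using assms(5)
proof (elim disjE)
  assume "(r1, r2, r3) = (1, 1 + x1, (1 + x1) * (1 + x2))"
  then have r: "r1 = 1" "r2 = 1 + x1" "r3 = (1 + x1) * (1 + x2)" by simp_all
  obtain t where "peak (coeff (geom (Suc x2) * geom (Suc x3))) t"
    using peak_geom_mult[OF coeff_geom_nonneg peak_geom] by blast
  then show ?thesis
    unfolding r h_star_case_i[OF assms(4)]
    by (rule unimodal_geom_mult[OF coeff_geom_mult_nonneg[OF coeff_geom_nonneg]])
next
  assume "(r1, r2, r3) = (1 + x2, 1 + x1 * (1 + x2), (1 + x1 * (1 + x2)) * (1 + x2))"
  then have r: "r1 = 1 + x2" "r2 = 1 + x1 * (1 + x2)" "r3 = (1 + x1 * (1 + x2)) * (1 + x2)"
    by simp_all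
  show ?thesis
    unfolding r h_star_case_ii[OF assms(4)]
    by (rule unimodal_geom_mult[OF digit_poly_nonneg peak_digit_poly])
next
  assume "(r1, r2, r3) = (1, (1 + x1) * (1 + x3), (1 + x1) * (1 + x2 * (1 + x3)))"
  then have r: "r1 = 1" "r2 = (1 + x1) * (1 + x3)" "r3 = (1 + x1) * (1 + x2 * (1 + x3))"
    by simp_all
  show ?thesis
    unfolding r h_star_case_iv[OF assms(4)]
    by (rule unimodal_geom_mult[OF digit_poly_nonneg peak_digit_poly])
qed

end
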